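(* Let $f\in\mathbb{C}[z_1,\dots,z_n]$ be homogeneous. Then $\mathcal{I}(f)$ is a closed cone (i.e. closed, and $\lambda\mathbf y\in\mathcal I(f)$ for all $\mathbf y\in\mathcal I(f)$, $\lambda\ge 0$), in general non-convex. Every connected component of $\mathbb{R}^n\setminus\mathcal{I}(f)$ is a hyperbolicity cone of $f$, and the components occur in pairs: if $C$ is a component then so is $-C$. In particular, $\mathbb{R}^n\setminus\mathcal{I}(f)$ has no bounded connected components.
   Context: For $f\in\mathbb{C}[z_1,\dots,z_n]$, $\mathcal{V}(f)\subseteq\mathbb{C}^n$ denotes its complex zero set and the imaginary projection of $f$ is $\mathcal{I}(f)=\{\Im(\mathbf z):\mathbf z\in\mathcal V(f)\}\subseteq\mathbb{R}^n$, where $\Im$ is taken componentwise. A homogeneous polynomial $f\in\mathbb{C}[z_1,\dots,z_n]$ is hyperbolic in direction $\mathbf e\in\mathbb{R}^n$ if $f(\mathbf e)\neq 0$ and for every $\mathbf x\in\mathbb{R}^n$ the univariate polynomial $t\mapsto f(\mathbf x+t\mathbf e)$ has only real roots. In that case the hyperbolicity cone of $f$ with respect to $\mathbf e$ is $C(\mathbf e)=\{\mathbf x\in\mathbb{R}^n: f(\mathbf x+t\mathbf e)=0\Rightarrow t<0\}$. The hyperbolicity cones of $f$ are the sets $C(\mathbf e)$ for all directions $\mathbf e$ in which $f$ is hyperbolic. *)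

theory Defs
  imports "HOL-Analysis.Analysis"
begin

text \<open>A polynomial in \<open>\<complex>[z_i : i \<in> 'n]\<close> is represented by its coefficient function
  on exponent vectors \<open>'n \<Rightarrow> nat\<close>; it must have finite support.\<close>

type_synonym 'n cpoly = "('n \<Rightarrow> nat) \<Rightarrow> complex"

definition is_mpoly :: "('n::finite) cpoly \<Rightarrow> bool" where
  "is_mpoly c \<longleftrightarrow> finite {\<alpha>. c \<alpha> \<noteq> 0}"

definition mpoly_eval :: "('n::finite) cpoly \<Rightarrow> complex ^ 'n \<Rightarrow> complex" where
  "mpoly_eval c z = (\<Sum>\<alpha> \<in> {\<alpha>. c \<alpha> \<noteq> 0}. c \<alpha> * (\<Prod>i\<in>UNIV. (z $ i) ^ (\<alpha> i)))"

definition homogeneous_mpoly :: "('n::finite) cpoly \<Rightarrow> bool" where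
  "homogeneous_mpoly c \<longleftrightarrow> (\<exists>d. \<forall>\<alpha>. c \<alpha> \<noteq> 0 \<longrightarrow> (\<Sum>i\<in>UNIV. \<alpha> i) = d)"

definition zero_set :: "('n::finite) cpoly \<Rightarrow> (complex ^ 'n) set" where
  "zero_set c = {z. mpoly_eval c z = 0}"

definition imag_proj :: "('n::finite) cpoly \<Rightarrow> (real ^ 'n) set" where
  "imag_proj c = {(\<chi> i. Im (z $ i)) | z. z \<in> zero_set c}"

definition cvec :: "real ^ 'n \<Rightarrow> complex ^ 'n" where
  "cvec x = (\<chi> i. complex_of_real (x $ i))"

definition hyperbolic :: "('n::finite) cpoly \<Rightarrow> real ^ 'n \<Rightarrow> bool" where
  "hyperbolic c e \<longleftrightarrow> mpoly_eval c (cvec e) \<noteq> 0 \<and>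
     (\<forall>x :: real ^ 'n. \<forall>t :: complex.
        mpoly_eval c (cvec x + t *s cvec e) = 0 \<longrightarrow> t \<in> \<real>)"

definition hyp_cone :: "('n::finite) cpoly \<Rightarrow> real ^ 'n \<Rightarrow> (real ^ 'n) set" where
  "hyp_cone c e = {x. \<forall>t :: real. mpoly_eval c (cvec (x + t *\<^sub>R e)) = 0 \<longrightarrow> t < 0}"

end

theory Submission
  imports Defs "HOL-Computational_Algebra.Fundamental_Theorem_Algebra"
begin

text \<open>Restricting \<open>f\<close> to a complex line \<open>a + \<tau> b\<close> with \<open>f(b) \<noteq> 0\<close> gives a polynomial in \<open>\<tau>\<close> of
  degree \<open>d\<close>, whose roots move continuously with \<open>a\<close> and stay bounded for bounded \<open>a\<close>. By
  homogeneity, \<open>y\<close> lies outside \<open>I(f)\<close> iff every restriction \<open>\<tau> \<mapsto> f(x + \<tau> y)\<close>, \<open>x\<close> real,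
  has only real roots; hence \<open>I(f)\<close> is invariant under all real scalings and its complement
  consists of hyperbolic directions.

  For \<open>e \<notin> I(f)\<close> and \<open>x\<close> in the hyperbolicity cone \<open>C(e)\<close> we follow Garding: for real \<open>w\<close>
  the set of \<open>\<beta> \<in> \<real>\<close> for which \<open>\<tau> \<mapsto> f(\<beta> w + i e + \<tau> x)\<close> has a root with \<open>Im \<tau> \<ge> 0\<close> is
  closed, open (such roots are never real) and misses \<open>\<beta> = 0\<close>, so it is empty; a root of
  \<open>f(w + i x)\<close> would survive a small perturbation \<open>w + i \<gamma> e\<close> and contradict this after
  rescaling. So the open star-shaped cone \<open>C(e)\<close> avoids \<open>I(f)\<close>; it is also relatively
  closed in the complement, since roots of \<open>f(y + \<tau> e)\<close> are real, and is therefore the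
  component of \<open>e\<close>. Symmetry and unboundedness of the components follow by homogeneity.\<close>

lemma coeff_mult_at_degree_bounds:
  fixes p q :: "'a::idom poly"
  assumes "degree p \<le> m" "degree q \<le> n"
  shows "coeff (p * q) (m + n) = coeff p m * coeff q n"
proof (cases "degree p = m \<and> degree q = n")
  case True
  then show ?thesis using coeff_mult_degree_sum by metis
next
  case False
  then have "degree (p * q) < m + n" using degree_mult_le[of p q] assms by linarith
  moreover have "coeff p m * coeff q n = 0"
    using False assms by (metis coeff_eq_0 le_neq_implies_less mult_eq_0_iff)
  ultimately show ?thesis by (simp add: coeff_eq_0)
qed

lemma coeff_prod_at_degree_bounds:
  fixes p :: "'i \<Rightarrow> 'a::idom poly"
  assumes "finite I" "\<And>i. i \<in> I \<Longrightarrow> degree (p i) \<le> n i"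
  shows "coeff (\<Prod>i\<in>I. p i) (\<Sum>i\<in>I. n i) = (\<Prod>i\<in>I. coeff (p i) (n i))"
  using assms
proof (induction I rule: finite_induct)
  case empty
  then show ?case by simp
next
  case (insert j I)
  have "degree (\<Prod>i\<in>I. p i) \<le> (\<Sum>i\<in>I. degree (p i))"
    using degree_prod_sum_le[OF insert.hyps(1)] by (simp add: o_def)
  also have "\<dots> \<le> (\<Sum>i\<in>I. n i)" using insert.prems by (intro sum_mono) auto
  finally have "coeff (p j * (\<Prod>i\<in>I. p i)) (n j + (\<Sum>i\<in>I. n i))
      = coeff (p j) (n j) * coeff (\<Prod>i\<in>I. p i) (\<Sum>i\<in>I. n i)"
    using insert.prems by (intro coeff_mult_at_degree_bounds) auto
  then show ?case using insert by simp
qed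

lemma coeff_power_at_degree_bound:
  fixes p :: "'a::idom poly"
  assumes "degree p \<le> n"
  shows "coeff (p ^ k) (k * n) = coeff p n ^ k"
  using coeff_prod_at_degree_bounds[of "{..<k}" "\<lambda>_. p" "\<lambda>_. n"] assms by simp

lemma continuous_on_mpoly_eval: "continuous_on UNIV (mpoly_eval f)"
  unfolding mpoly_eval_def by (intro continuous_intros)

lemma norm_vector_smult: "norm (c *s x) = norm c * norm (x :: complex ^ 'n)"
  unfolding norm_vec_def by (simp add: norm_mult L2_set_right_distrib)

lemma cvec_zero [simp]: "cvec 0 = 0"
  by (simp add: cvec_def vec_eq_iff)

lemma continuous_on_cvec: "continuous_on UNIV cvec"
  unfolding cvec_def by (intro continuous_intros)

lemma imag_proj_iff: "y \<in> imag_proj f \<longleftrightarrow> (\<exists>x. mpoly_eval f (cvec x + \<i> *s cvec y) = 0)"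
proof
  assume "y \<in> imag_proj f"
  then obtain z where z: "mpoly_eval f z = 0" "y = (\<chi> i. Im (z $ i))"
    unfolding imag_proj_def zero_set_def by blast
  then have "z = cvec (\<chi> i. Re (z $ i)) + \<i> *s cvec y"
    by (simp add: vec_eq_iff cvec_def complex_eq_iff)
  with z(1) show "\<exists>x. mpoly_eval f (cvec x + \<i> *s cvec y) = 0" by metis
next
  assume "\<exists>x. mpoly_eval f (cvec x + \<i> *s cvec y) = 0"
  then obtain x where "mpoly_eval f (cvec x + \<i> *s cvec y) = 0" by blast
  moreover have "y = (\<chi> i. Im ((cvec x + \<i> *s cvec y) $ i))"
    by (simp add: vec_eq_iff cvec_def)
  ultimately show "y \<in> imag_proj f" unfolding imag_proj_def zero_set_def by blast
qed

lemma not_bounded_if_open_scaleR_invariant: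
  fixes S :: "'a::euclidean_space set"
  assumes "open S" "S \<noteq> {}" and scale: "\<And>x l. x \<in> S \<Longrightarrow> 0 < l \<Longrightarrow> l *\<^sub>R x \<in> S"
  shows "\<not> bounded S"
proof
  assume "bounded S"
  then obtain B where B: "\<And>x. x \<in> S \<Longrightarrow> norm x \<le> B" unfolding bounded_iff by blast
  have "\<not> S \<subseteq> {0}" using assms(1,2) finite_imp_not_open finite_subset by blast
  then obtain x where "x \<in> S" "x \<noteq> 0" by blast
  then have "((\<bar>B\<bar> + 1) / norm x) *\<^sub>R x \<in> S" by (intro scale) auto
  moreover have "norm (((\<bar>B\<bar> + 1) / norm x) *\<^sub>R x) = \<bar>B\<bar> + 1" using \<open>x \<noteq> 0\<close> by simp
  ultimately show False using B by force
qed

locale homogeneous_cpoly =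
  fixes f :: "('n::finite) cpoly" and d :: nat
  assumes finite_support: "is_mpoly f"
    and degree_eq: "\<And>\<alpha>. f \<alpha> \<noteq> 0 \<Longrightarrow> (\<Sum>i\<in>UNIV. \<alpha> i) = d"
begin

lemma mpoly_eval_smult: "mpoly_eval f (c *s z) = c ^ d * mpoly_eval f z"
  unfolding mpoly_eval_def sum_distrib_left
proof (rule sum.cong[OF refl])
  fix \<alpha> assume "\<alpha> \<in> {\<alpha>. f \<alpha> \<noteq> 0}"
  then have "(\<Prod>i\<in>UNIV. c ^ \<alpha> i) = c ^ d"
    using degree_eq power_sum[of c \<alpha> UNIV] by simp
  moreover have "(\<Prod>i\<in>UNIV. ((c *s z) $ i) ^ \<alpha> i) = (\<Prod>i\<in>UNIV. c ^ \<alpha> i) * (\<Prod>i\<in>UNIV. (z $ i) ^ \<alpha> i)"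
    by (simp add: power_mult_distrib prod.distrib)
  ultimately show "f \<alpha> * (\<Prod>i\<in>UNIV. ((c *s z) $ i) ^ \<alpha> i) = c ^ d * (f \<alpha> * (\<Prod>i\<in>UNIV. (z $ i) ^ \<alpha> i))"
    by simp
qed

lemma line_restriction_poly:
  obtains P where "\<And>\<tau>. poly P \<tau> = mpoly_eval f (a + \<tau> *s b)" "degree P \<le> d"
    "coeff P d = mpoly_eval f b"
proof
  define S where "S = {\<alpha>. f \<alpha> \<noteq> 0}"
  define m where "m \<alpha> = (\<Prod>i\<in>UNIV. [:a $ i, b $ i:] ^ \<alpha> i)" for \<alpha>
  define P where "P = (\<Sum>\<alpha>\<in>S. smult (f \<alpha>) (m \<alpha>))"
  have "finite S" using finite_support unfolding is_mpoly_def S_def .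
  have deg_factor: "degree ([:a $ i, b $ i:] ^ k) \<le> k" for i k
    using degree_power_le[of "[:a $ i, b $ i:]" k] by (simp split: if_splits)
  have deg_m: "degree (m \<alpha>) \<le> (\<Sum>i\<in>UNIV. \<alpha> i)" for \<alpha>
  proof -
    have "degree (m \<alpha>) \<le> (\<Sum>i\<in>UNIV. degree ([:a $ i, b $ i:] ^ \<alpha> i))"
      unfolding m_def using degree_prod_sum_le[of UNIV "\<lambda>i. [:a $ i, b $ i:] ^ \<alpha> i"]
      by (simp add: o_def)
    also have "\<dots> \<le> (\<Sum>i\<in>UNIV. \<alpha> i)" by (intro sum_mono deg_factor)
    finally show ?thesis .
  qed
  have coeff_m: "coeff (m \<alpha>) (\<Sum>i\<in>UNIV. \<alpha> i) = (\<Prod>i\<in>UNIV. (b $ i) ^ \<alpha> i)" for \<alpha>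
  proof -
    have "coeff (m \<alpha>) (\<Sum>i\<in>UNIV. \<alpha> i * 1) = (\<Prod>i\<in>UNIV. coeff ([:a $ i, b $ i:] ^ \<alpha> i) (\<alpha> i * 1))"
      unfolding m_def by (rule coeff_prod_at_degree_bounds) (use deg_factor in auto)
    then show ?thesis using coeff_power_at_degree_bound[of "[:a $ i, b $ i:]" 1 for i] by simp
  qed
  show "poly P \<tau> = mpoly_eval f (a + \<tau> *s b)" for \<tau>
    unfolding P_def m_def mpoly_eval_def S_def by (simp add: poly_sum poly_prod)
  show "degree P \<le> d"
    unfolding P_def
  proof (intro degree_sum_le[OF \<open>finite S\<close>] order.trans[OF degree_smult_le])
    fix \<alpha> assume "\<alpha> \<in> S"
    then show "degree (m \<alpha>) \<le> d" using deg_m degree_eq unfolding S_def by fastforce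
  qed
  show "coeff P d = mpoly_eval f b"
    unfolding P_def mpoly_eval_def S_def coeff_sum using coeff_m degree_eq
    by (intro sum.cong) auto
qed

lemma line_restriction_factor:
  assumes "mpoly_eval f b \<noteq> 0"
  obtains \<rho> where "\<And>\<tau>. mpoly_eval f (a + \<tau> *s b) = mpoly_eval f b * (\<Prod>j<d. \<tau> - \<rho> j)"
proof -
  obtain P where P: "\<And>\<tau>. poly P \<tau> = mpoly_eval f (a + \<tau> *s b)" "degree P \<le> d"
    "coeff P d = mpoly_eval f b"
    using line_restriction_poly[of a b] by blast
  have "degree P = d" using P(2,3) assms le_degree by (metis le_antisym)
  obtain \<rho> where \<rho>: "smult (lead_coeff P) (\<Prod>i<degree P. [:- \<rho> i, 1:]) = P"
    using complex_poly_decompose' by blast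
  have "poly P \<tau> = mpoly_eval f b * (\<Prod>j<d. \<tau> - \<rho> j)" for \<tau>
    using arg_cong[OF \<rho>, of "\<lambda>p. poly p \<tau>"] \<open>degree P = d\<close> P(3) by (simp add: poly_prod)
  with P(1) that show ?thesis by metis
qed

lemma roots_near_root:
  assumes fb: "mpoly_eval f b \<noteq> 0" and root: "mpoly_eval f (a + \<sigma> *s b) = 0" and "\<epsilon> > 0"
  obtains \<delta> where "\<delta> > 0"
    "\<And>a'. dist a' a < \<delta> \<Longrightarrow> \<exists>\<tau>. dist \<tau> \<sigma> < \<epsilon> \<and> mpoly_eval f (a' + \<tau> *s b) = 0"
proof -
  \<comment> \<open>lower bound for \<open>|f(a' + \<sigma> b)|\<close> when all roots of the restriction at \<open>a'\<close> are \<open>\<epsilon>\<close>-far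
    from \<open>\<sigma>\<close>\<close>
  define \<eta> where "\<eta> = norm (mpoly_eval f b) * \<epsilon> ^ d"
  have "\<eta> > 0" using fb \<open>\<epsilon> > 0\<close> unfolding \<eta>_def by simp
  have "continuous_on UNIV (\<lambda>a. mpoly_eval f (a + \<sigma> *s b))"
    by (rule continuous_on_compose2[OF continuous_on_mpoly_eval]) (auto intro!: continuous_intros)
  then obtain \<delta> where "\<delta> > 0" and \<delta>: "\<And>a'. dist a' a < \<delta> \<Longrightarrow> norm (mpoly_eval f (a' + \<sigma> *s b)) < \<eta>"
    using \<open>\<eta> > 0\<close> root unfolding continuous_on_iff dist_norm by (metis UNIV_I diff_zero)
  have "\<exists>\<tau>. dist \<tau> \<sigma> < \<epsilon> \<and> mpoly_eval f (a' + \<tau> *s b) = 0" if "dist a' a < \<delta>" for a'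
  proof (rule ccontr)
    assume no_root: "\<not> ?thesis"
    obtain \<rho> where \<rho>: "\<And>\<tau>. mpoly_eval f (a' + \<tau> *s b) = mpoly_eval f b * (\<Prod>j<d. \<tau> - \<rho> j)"
      using line_restriction_factor[OF fb] by blast
    have far: "\<epsilon> \<le> norm (\<sigma> - \<rho> j)" if "j < d" for j
    proof -
      have "mpoly_eval f (a' + \<rho> j *s b) = 0" using \<rho> that by (auto simp: prod_zero_iff)
      then have "\<not> dist (\<rho> j) \<sigma> < \<epsilon>" using no_root by blast
      then show ?thesis by (simp add: dist_norm norm_minus_commute)
    qed
    have "\<epsilon> ^ d \<le> (\<Prod>j<d. norm (\<sigma> - \<rho> j))"
      using prod_mono[of "{..<d}" "\<lambda>_. \<epsilon>"] far \<open>\<epsilon> > 0\<close> by simp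
    then have "\<eta> \<le> norm (mpoly_eval f b) * (\<Prod>j<d. norm (\<sigma> - \<rho> j))"
      unfolding \<eta>_def by (simp add: mult_left_mono)
    also have "\<dots> = norm (mpoly_eval f (a' + \<sigma> *s b))" by (simp add: \<rho> norm_mult prod_norm)
    finally show False using \<delta>[OF that] by simp
  qed
  with \<open>\<delta> > 0\<close> that show ?thesis by blast
qed

lemma roots_bounded:
  assumes fb: "mpoly_eval f b \<noteq> 0"
  obtains R where "\<And>a \<sigma>. norm a \<le> M \<Longrightarrow> mpoly_eval f (a + \<sigma> *s b) = 0 \<Longrightarrow> norm \<sigma> \<le> R"
proof -
  obtain \<delta> where "\<delta> > 0" and
    \<delta>: "\<And>z. dist z b < \<delta> \<Longrightarrow> dist (mpoly_eval f z) (mpoly_eval f b) < norm (mpoly_eval f b)"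
    using continuous_on_mpoly_eval[of f] fb unfolding continuous_on_iff
    by (metis UNIV_I zero_less_norm_iff)
  have "norm \<sigma> \<le> M / \<delta>" if "norm a \<le> M" "mpoly_eval f (a + \<sigma> *s b) = 0" for a \<sigma>
  proof (rule ccontr)
    assume "\<not> norm \<sigma> \<le> M / \<delta>"
    moreover have "0 \<le> M" using that(1) norm_ge_zero order.trans by blast
    ultimately have "norm a < \<delta> * norm \<sigma>" "\<sigma> \<noteq> 0"
      using that(1) \<open>\<delta> > 0\<close> by (auto simp: field_simps)
    moreover have "norm (inverse \<sigma> *s a) = norm a / norm \<sigma>"
      by (simp add: norm_vector_smult norm_inverse divide_inverse mult.commute)
    ultimately have "dist (inverse \<sigma> *s a + b) b < \<delta>"
      by (simp add: dist_norm divide_less_eq)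
    moreover have "a + \<sigma> *s b = \<sigma> *s (inverse \<sigma> *s a + b)"
      using \<open>\<sigma> \<noteq> 0\<close> by (simp add: vector_add_ldistrib vector_smult_assoc)
    then have "mpoly_eval f (inverse \<sigma> *s a + b) = 0"
      using that(2) \<open>\<sigma> \<noteq> 0\<close> by (metis mpoly_eval_smult mult_eq_0_iff power_eq_0_iff)
    ultimately show False using \<delta> by fastforce
  qed
  with that show ?thesis by blast
qed

lemma continuous_on_line_eval: "continuous_on UNIV (\<lambda>(a, \<sigma>). mpoly_eval f (a + \<sigma> *s b))"
  unfolding case_prod_unfold vector_scalar_mult_def
  by (rule continuous_on_compose2[OF continuous_on_mpoly_eval]) (auto intro!: continuous_intros)

lemma closed_root_params:
  fixes p :: "'a::metric_space \<Rightarrow> complex ^ 'n"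
  assumes p: "continuous_on UNIV p" and fb: "mpoly_eval f b \<noteq> 0" and "closed Q"
  shows "closed {\<beta>. \<exists>\<sigma>\<in>Q. mpoly_eval f (p \<beta> + \<sigma> *s b) = 0}"
  unfolding closed_sequential_limits
proof (intro allI impI, elim conjE)
  fix \<beta>s \<beta> assume "\<forall>n. \<beta>s n \<in> {\<beta>. \<exists>\<sigma>\<in>Q. mpoly_eval f (p \<beta> + \<sigma> *s b) = 0}" and "\<beta>s \<longlonglongrightarrow> \<beta>"
  then have "\<forall>n. \<exists>\<sigma>. \<sigma> \<in> Q \<and> mpoly_eval f (p (\<beta>s n) + \<sigma> *s b) = 0" by blast
  then obtain \<sigma>s where \<sigma>s: "\<And>n. \<sigma>s n \<in> Q" "\<And>n. mpoly_eval f (p (\<beta>s n) + \<sigma>s n *s b) = 0"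
    by metis
  have p_lim: "(\<lambda>n. p (\<beta>s n)) \<longlonglongrightarrow> p \<beta>"
    using \<open>\<beta>s \<longlonglongrightarrow> \<beta>\<close> p by (intro continuous_on_tendsto_compose[of UNIV p]) auto
  then obtain M where "\<And>n. norm (p (\<beta>s n)) \<le> M"
    using convergent_imp_bounded[OF p_lim] unfolding bounded_iff by blast
  moreover obtain R where "\<And>a \<sigma>. norm a \<le> M \<Longrightarrow> mpoly_eval f (a + \<sigma> *s b) = 0 \<Longrightarrow> norm \<sigma> \<le> R"
    using roots_bounded[OF fb] by blast
  ultimately have "bounded (range \<sigma>s)" using \<sigma>s(2) unfolding bounded_iff by blast
  then obtain \<sigma> r where r: "strict_mono r" "(\<sigma>s \<circ> r) \<longlonglongrightarrow> \<sigma>"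
    using bounded_imp_convergent_subsequence by blast
  have "\<sigma> \<in> Q" using closed_sequentially[OF \<open>closed Q\<close> _ r(2)] \<sigma>s(1) by simp
  have "(\<lambda>n. (p (\<beta>s (r n)), \<sigma>s (r n))) \<longlonglongrightarrow> (p \<beta>, \<sigma>)"
    using LIMSEQ_subseq_LIMSEQ[OF p_lim r(1)] r(2) by (intro tendsto_Pair) (simp_all add: o_def)
  from continuous_on_tendsto_compose[OF continuous_on_line_eval[of b] this]
  have "(\<lambda>n. 0) \<longlonglongrightarrow> mpoly_eval f (p \<beta> + \<sigma> *s b)" using \<sigma>s(2) by simp
  then have "mpoly_eval f (p \<beta> + \<sigma> *s b) = 0" using LIMSEQ_unique tendsto_const by blast
  with \<open>\<sigma> \<in> Q\<close> show "\<beta> \<in> {\<beta>. \<exists>\<sigma>\<in>Q. mpoly_eval f (p \<beta> + \<sigma> *s b) = 0}" by blast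
qed

lemma open_root_params:
  fixes p :: "'a::topological_space \<Rightarrow> complex ^ 'n"
  assumes p: "continuous_on UNIV p" and fb: "mpoly_eval f b \<noteq> 0" and "open Q"
  shows "open {\<beta>. \<exists>\<sigma>\<in>Q. mpoly_eval f (p \<beta> + \<sigma> *s b) = 0}"
proof (rule Topological_Spaces.openI)
  fix \<beta>0 assume "\<beta>0 \<in> {\<beta>. \<exists>\<sigma>\<in>Q. mpoly_eval f (p \<beta> + \<sigma> *s b) = 0}"
  then obtain \<sigma>0 where "\<sigma>0 \<in> Q" and root: "mpoly_eval f (p \<beta>0 + \<sigma>0 *s b) = 0" by blast
  then obtain \<epsilon> where "\<epsilon> > 0" "ball \<sigma>0 \<epsilon> \<subseteq> Q" using \<open>open Q\<close> open_contains_ball by blast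
  obtain \<delta> where "\<delta> > 0" and \<delta>:
    "\<And>a'. dist a' (p \<beta>0) < \<delta> \<Longrightarrow> \<exists>\<tau>. dist \<tau> \<sigma>0 < \<epsilon> \<and> mpoly_eval f (a' + \<tau> *s b) = 0"
    using roots_near_root[OF fb root \<open>\<epsilon> > 0\<close>] by blast
  have "p -` ball (p \<beta>0) \<delta> \<subseteq> {\<beta>. \<exists>\<sigma>\<in>Q. mpoly_eval f (p \<beta> + \<sigma> *s b) = 0}"
  proof
    fix \<beta> assume "\<beta> \<in> p -` ball (p \<beta>0) \<delta>"
    then obtain \<tau> where "dist \<tau> \<sigma>0 < \<epsilon>" "mpoly_eval f (p \<beta> + \<tau> *s b) = 0"
      using \<delta>[of "p \<beta>"] by (auto simp: dist_commute)
    with \<open>ball \<sigma>0 \<epsilon> \<subseteq> Q\<close> show "\<beta> \<in> {\<beta>. \<exists>\<sigma>\<in>Q. mpoly_eval f (p \<beta> + \<sigma> *s b) = 0}"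
      by (auto simp: dist_commute)
  qed
  moreover have "open (p -` ball (p \<beta>0) \<delta>)" using p by (intro open_vimage) auto
  ultimately show "\<exists>T. open T \<and> \<beta>0 \<in> T \<and> T \<subseteq> {\<beta>. \<exists>\<sigma>\<in>Q. mpoly_eval f (p \<beta> + \<sigma> *s b) = 0}"
    using \<open>\<delta> > 0\<close> by auto
qed

lemma scaleR_in_imag_proj:
  assumes "y \<in> imag_proj f"
  shows "a *\<^sub>R y \<in> imag_proj f"
proof -
  obtain z where z: "mpoly_eval f z = 0" "y = (\<chi> i. Im (z $ i))"
    using assms unfolding imag_proj_def zero_set_def by blast
  have "mpoly_eval f (complex_of_real a *s z) = 0" using z(1) mpoly_eval_smult by simp
  moreover have "a *\<^sub>R y = (\<chi> i. Im ((complex_of_real a *s z) $ i))" using z(2) by (simp add: vec_eq_iff)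
  ultimately show ?thesis unfolding imag_proj_def zero_set_def by blast
qed

lemma real_roots_if_notin_imag_proj:
  assumes e: "e \<notin> imag_proj f" and root: "mpoly_eval f (cvec x + \<tau> *s cvec e) = 0"
  shows "Im \<tau> = 0"
proof (rule ccontr)
  assume "Im \<tau> \<noteq> 0"
  then have "cvec x + \<tau> *s cvec e
      = complex_of_real (Im \<tau>) *s (cvec ((1 / Im \<tau>) *\<^sub>R (x + Re \<tau> *\<^sub>R e)) + \<i> *s cvec e)"
    by (simp add: vec_eq_iff cvec_def complex_eq_iff field_simps)
  then have "mpoly_eval f (cvec ((1 / Im \<tau>) *\<^sub>R (x + Re \<tau> *\<^sub>R e)) + \<i> *s cvec e) = 0"
    using root \<open>Im \<tau> \<noteq> 0\<close> by (metis mpoly_eval_smult mult_eq_0_iff of_real_eq_0_iff power_eq_0_iff)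
  with e show False unfolding imag_proj_iff by blast
qed

lemma mpoly_eval_cvec_nonzero_if_notin_imag_proj:
  assumes "e \<notin> imag_proj f"
  shows "mpoly_eval f (cvec e) \<noteq> 0"
proof
  assume "mpoly_eval f (cvec e) = 0"
  then have "mpoly_eval f (cvec 0 + \<i> *s cvec e) = 0" by (simp add: mpoly_eval_smult)
  with assms show False unfolding imag_proj_iff by blast
qed

lemma hyperbolic_if_notin_imag_proj: "e \<notin> imag_proj f \<Longrightarrow> hyperbolic f e"
  unfolding hyperbolic_def
  using mpoly_eval_cvec_nonzero_if_notin_imag_proj real_roots_if_notin_imag_proj complex_is_Real_iff
  by blast

lemma hyp_cone_iff:
  "x \<in> hyp_cone f e \<longleftrightarrow> (\<forall>t::real. mpoly_eval f (cvec x + complex_of_real t *s cvec e) = 0 \<longrightarrow> t < 0)"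
proof -
  have "cvec (x + t *\<^sub>R e) = cvec x + complex_of_real t *s cvec e" for t
    by (simp add: cvec_def vec_eq_iff)
  then show ?thesis unfolding hyp_cone_def by simp
qed

lemma mpoly_eval_cvec_nonzero_if_in_hyp_cone:
  "x \<in> hyp_cone f e \<Longrightarrow> mpoly_eval f (cvec x) \<noteq> 0"
  unfolding hyp_cone_iff by (metis add.right_neutral less_irrefl of_real_0 vector_smult_lzero)

lemma self_in_hyp_cone:
  assumes "mpoly_eval f (cvec e) \<noteq> 0"
  shows "e \<in> hyp_cone f e"
  unfolding hyp_cone_iff
proof (intro allI impI)
  fix t :: real
  have "cvec e + complex_of_real t *s cvec e = complex_of_real (1 + t) *s cvec e"
    by (simp add: vec_eq_iff cvec_def algebra_simps)
  moreover assume "mpoly_eval f (cvec e + complex_of_real t *s cvec e) = 0"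
  ultimately have "complex_of_real (1 + t) ^ d * mpoly_eval f (cvec e) = 0"
    by (metis mpoly_eval_smult)
  then have "1 + t = 0" using assms by (metis mult_eq_0_iff of_real_eq_0_iff power_eq_0_iff)
  then show "t < 0" by simp
qed

lemma add_scaleR_in_hyp_cone:
  assumes "x \<in> hyp_cone f e" "0 \<le> c"
  shows "x + c *\<^sub>R e \<in> hyp_cone f e"
  unfolding hyp_cone_def
proof (intro CollectI allI impI)
  fix t :: real
  assume "mpoly_eval f (cvec (x + c *\<^sub>R e + t *\<^sub>R e)) = 0"
  then have "mpoly_eval f (cvec (x + (c + t) *\<^sub>R e)) = 0" by (simp add: scaleR_left_distrib add.assoc)
  then have "c + t < 0" using assms(1) unfolding hyp_cone_def by blast
  with assms(2) show "t < 0" by simp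
qed

lemma scaleR_in_hyp_cone:
  assumes "x \<in> hyp_cone f e" "0 < l"
  shows "l *\<^sub>R x \<in> hyp_cone f e"
  unfolding hyp_cone_iff
proof (intro allI impI)
  fix t :: real
  have "cvec (l *\<^sub>R x) + complex_of_real t *s cvec e
      = complex_of_real l *s (cvec x + complex_of_real (t / l) *s cvec e)"
    using assms(2) by (simp add: vec_eq_iff cvec_def field_simps)
  moreover assume "mpoly_eval f (cvec (l *\<^sub>R x) + complex_of_real t *s cvec e) = 0"
  ultimately have "complex_of_real l ^ d * mpoly_eval f (cvec x + complex_of_real (t / l) *s cvec e) = 0"
    by (metis mpoly_eval_smult)
  then have "mpoly_eval f (cvec x + complex_of_real (t / l) *s cvec e) = 0"
    using assms(2) by simp
  then have "t / l < 0" using assms(1) unfolding hyp_cone_iff by blast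
  with assms(2) show "t < 0" by (simp add: divide_less_0_iff)
qed

lemma connected_hyp_cone:
  assumes "mpoly_eval f (cvec e) \<noteq> 0"
  shows "connected (hyp_cone f e)"
proof (rule starlike_imp_connected)
  have "(1 - s) *\<^sub>R e + s *\<^sub>R x \<in> hyp_cone f e"
    if "x \<in> hyp_cone f e" "0 \<le> s" "s \<le> 1" for x s
  proof (cases "s = 0")
    case True
    then show ?thesis using self_in_hyp_cone[OF assms] by simp
  next
    case False
    then have "(1 - s) *\<^sub>R e + s *\<^sub>R x = s *\<^sub>R (x + ((1 - s) / s) *\<^sub>R e)"
      by (simp add: scaleR_add_right)
    moreover have "x + ((1 - s) / s) *\<^sub>R e \<in> hyp_cone f e"
      using that by (intro add_scaleR_in_hyp_cone) auto
    ultimately show ?thesis using False that by (simp add: scaleR_in_hyp_cone)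
  qed
  then show "starlike (hyp_cone f e)"
    unfolding starlike_def
    by (intro bexI[of _ e] ballI self_in_hyp_cone[OF assms]) (auto simp: in_segment)
qed

lemma open_hyp_cone:
  assumes "mpoly_eval f (cvec e) \<noteq> 0"
  shows "open (hyp_cone f e)"
proof -
  define Q where "Q = {\<sigma>. Im \<sigma> = 0 \<and> 0 \<le> Re \<sigma>}"
  have "closed Q" unfolding Q_def
    by (intro closed_Collect_conj closed_Collect_eq closed_Collect_le continuous_intros)
  then have "closed {x. \<exists>\<sigma>\<in>Q. mpoly_eval f (cvec x + \<sigma> *s cvec e) = 0}"
    using closed_root_params[OF continuous_on_cvec assms] by blast
  moreover have "\<sigma> \<in> Q \<longleftrightarrow> (\<exists>t\<ge>0. \<sigma> = complex_of_real t)" for \<sigma>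
    unfolding Q_def by (auto simp: complex_eq_iff)
  then have "- hyp_cone f e = {x. \<exists>\<sigma>\<in>Q. mpoly_eval f (cvec x + \<sigma> *s cvec e) = 0}"
    by (auto simp: Bex_def hyp_cone_iff not_less) (blast, meson not_le)
  ultimately show ?thesis by (simp add: open_closed)
qed

lemma not_bounded_hyp_cone:
  assumes "mpoly_eval f (cvec e) \<noteq> 0"
  shows "\<not> bounded (hyp_cone f e)"
  using open_hyp_cone[OF assms] self_in_hyp_cone[OF assms] scaleR_in_hyp_cone
  by (intro not_bounded_if_open_scaleR_invariant) auto

lemma uminus_hyp_cone: "uminus ` hyp_cone f e = hyp_cone f (- e)"
proof -
  have "cvec (- x) + complex_of_real t *s cvec e = (- 1) *s (cvec x + complex_of_real t *s cvec (- e))"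
    for x t by (simp add: vec_eq_iff cvec_def)
  then have "- x \<in> hyp_cone f e \<longleftrightarrow> x \<in> hyp_cone f (- e)" for x
    unfolding hyp_cone_iff by (simp only: mpoly_eval_smult) simp
  then show ?thesis by force
qed

lemma imag_axis_upper_root_free:
  assumes e: "e \<notin> imag_proj f" and x: "x \<in> hyp_cone f e" and "0 \<le> Im \<sigma>"
  shows "mpoly_eval f (\<i> *s cvec e + \<sigma> *s cvec x) \<noteq> 0"
proof
  assume root: "mpoly_eval f (\<i> *s cvec e + \<sigma> *s cvec x) = 0"
  have "\<sigma> \<noteq> 0"
    using root mpoly_eval_cvec_nonzero_if_notin_imag_proj[OF e] by (auto simp: mpoly_eval_smult)
  then have "\<i> *s cvec e + \<sigma> *s cvec x = \<sigma> *s (cvec x + (\<i> / \<sigma>) *s cvec e)"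
    by (simp add: vec_eq_iff field_simps)
  then have root': "mpoly_eval f (cvec x + (\<i> / \<sigma>) *s cvec e) = 0"
    using root \<open>\<sigma> \<noteq> 0\<close> by (metis mpoly_eval_smult mult_eq_0_iff power_eq_0_iff)
  define r where "r = Re (\<i> / \<sigma>)"
  have "\<i> / \<sigma> = complex_of_real r"
    using real_roots_if_notin_imag_proj[OF e root'] unfolding r_def by (simp add: complex_eq_iff)
  then have "r < 0" and i_eq: "\<i> = \<sigma> * complex_of_real r"
    using root' x \<open>\<sigma> \<noteq> 0\<close> unfolding hyp_cone_iff by (metis, simp add: divide_eq_eq mult.commute)
  have "Im \<sigma> * r = 1" using arg_cong[OF i_eq, of Im] by simp
  with \<open>r < 0\<close> \<open>0 \<le> Im \<sigma>\<close> show False using mult_nonneg_nonpos[of "Im \<sigma>" r] by simp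
qed

lemma upper_half_plane_root_free:
  assumes e: "e \<notin> imag_proj f" and x: "x \<in> hyp_cone f e" and "0 \<le> Im \<sigma>"
  shows "mpoly_eval f (cvec w + \<i> *s cvec e + \<sigma> *s cvec x) \<noteq> 0"
proof -
  define p where "p \<beta> = cvec (\<beta> *\<^sub>R w) + \<i> *s cvec e" for \<beta> :: real
  define A where "A Q = {\<beta>. \<exists>\<sigma>\<in>Q. mpoly_eval f (p \<beta> + \<sigma> *s cvec x) = 0}" for Q
  have fx: "mpoly_eval f (cvec x) \<noteq> 0" by (rule mpoly_eval_cvec_nonzero_if_in_hyp_cone[OF x])
  have p: "continuous_on UNIV p"
    unfolding p_def cvec_def vector_scalar_mult_def by (intro continuous_intros)
  \<comment> \<open>the roots are never real, so the closed condition \<open>0 \<le> Im \<sigma>\<close> is also an open one\<close>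
  have "Im \<tau> \<noteq> 0" if "mpoly_eval f (p \<beta> + \<tau> *s cvec x) = 0" for \<beta> \<tau>
  proof
    assume "Im \<tau> = 0"
    then have "p \<beta> + \<tau> *s cvec x = cvec (\<beta> *\<^sub>R w + Re \<tau> *\<^sub>R x) + \<i> *s cvec e"
      by (simp add: p_def vec_eq_iff cvec_def complex_eq_iff)
    with that e show False unfolding imag_proj_iff by metis
  qed
  then have "A {\<sigma>. 0 \<le> Im \<sigma>} = A {\<sigma>. 0 < Im \<sigma>}" unfolding A_def by (auto simp: le_less)
  moreover have "closed (A {\<sigma>. 0 \<le> Im \<sigma>})"
    unfolding A_def by (rule closed_root_params[OF p fx]) (intro closed_Collect_le continuous_intros)
  moreover have "open (A {\<sigma>. 0 < Im \<sigma>})"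
    unfolding A_def by (rule open_root_params[OF p fx]) (intro open_Collect_less continuous_intros)
  ultimately have "A {\<sigma>. 0 \<le> Im \<sigma>} = {} \<or> A {\<sigma>. 0 \<le> Im \<sigma>} = UNIV"
    using clopen[of "A {\<sigma>. 0 \<le> Im \<sigma>}"] by simp
  moreover have "0 \<notin> A {\<sigma>. 0 \<le> Im \<sigma>}"
    using imag_axis_upper_root_free[OF e x] by (simp add: A_def p_def)
  ultimately have "1 \<notin> A {\<sigma>. 0 \<le> Im \<sigma>}" by auto
  with \<open>0 \<le> Im \<sigma>\<close> show ?thesis by (auto simp: A_def p_def)
qed

lemma hyp_cone_subset_compl_imag_proj:
  assumes e: "e \<notin> imag_proj f"
  shows "hyp_cone f e \<subseteq> - imag_proj f"
proof
  fix x assume x: "x \<in> hyp_cone f e"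
  show "x \<in> - imag_proj f"
  proof
    assume "x \<in> imag_proj f"
    then obtain w where root: "mpoly_eval f (cvec w + \<i> *s cvec x) = 0"
      unfolding imag_proj_iff by blast
    define p where "p \<gamma> = cvec w + (\<i> * complex_of_real \<gamma>) *s cvec e" for \<gamma> :: real
    define S where "S = {\<gamma>. \<exists>\<sigma>\<in>{\<sigma>. 0 < Im \<sigma>}. mpoly_eval f (p \<gamma> + \<sigma> *s cvec x) = 0}"
    \<comment> \<open>the root \<open>\<i>\<close> at \<open>\<gamma> = 0\<close> survives in the upper half plane for some small \<open>\<gamma> > 0\<close>,
      and rescaling by \<open>\<gamma>\<close> turns it into a root excluded by the previous lemma\<close>
    have "continuous_on UNIV p"
      unfolding p_def cvec_def vector_scalar_mult_def by (intro continuous_intros)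
    then have "open S" unfolding S_def
      by (rule open_root_params[OF _ mpoly_eval_cvec_nonzero_if_in_hyp_cone[OF x]])
        (intro open_Collect_less continuous_intros)
    moreover have "0 \<in> S" using root by (force simp: S_def p_def)
    ultimately obtain r where "r > 0" "ball 0 r \<subseteq> S" using open_contains_ball by blast
    define \<gamma> where "\<gamma> = r / 2"
    have "\<gamma> > 0" "\<gamma> \<in> S" using \<open>r > 0\<close> \<open>ball 0 r \<subseteq> S\<close> by (auto simp: \<gamma>_def)
    then obtain \<sigma> where "0 < Im \<sigma>" and root_\<gamma>: "mpoly_eval f (p \<gamma> + \<sigma> *s cvec x) = 0"
      unfolding S_def by blast
    have "p \<gamma> + \<sigma> *s cvec x = complex_of_real \<gamma> *s
        (cvec ((1 / \<gamma>) *\<^sub>R w) + \<i> *s cvec e + (\<sigma> / complex_of_real \<gamma>) *s cvec x)"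
      using \<open>\<gamma> > 0\<close> by (simp add: p_def vec_eq_iff cvec_def field_simps)
    then have "complex_of_real \<gamma> ^ d * mpoly_eval f
        (cvec ((1 / \<gamma>) *\<^sub>R w) + \<i> *s cvec e + (\<sigma> / complex_of_real \<gamma>) *s cvec x) = 0"
      using root_\<gamma> by (metis mpoly_eval_smult)
    then have "mpoly_eval f (cvec ((1 / \<gamma>) *\<^sub>R w) + \<i> *s cvec e + (\<sigma> / complex_of_real \<gamma>) *s cvec x) = 0"
      using \<open>\<gamma> > 0\<close> by simp
    moreover have "0 \<le> Im (\<sigma> / complex_of_real \<gamma>)" using \<open>0 < Im \<sigma>\<close> \<open>\<gamma> > 0\<close> by simp
    ultimately show False using upper_half_plane_root_free[OF e x] by blast
  qed
qed

lemma open_compl_imag_proj: "open (- imag_proj f)"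
proof (rule Topological_Spaces.openI)
  fix e assume "e \<in> - imag_proj f"
  then have e: "e \<notin> imag_proj f" by simp
  then have "mpoly_eval f (cvec e) \<noteq> 0" by (rule mpoly_eval_cvec_nonzero_if_notin_imag_proj)
  then show "\<exists>T. open T \<and> e \<in> T \<and> T \<subseteq> - imag_proj f"
    using open_hyp_cone self_in_hyp_cone hyp_cone_subset_compl_imag_proj[OF e] by blast
qed

lemma compl_imag_proj_split:
  assumes e: "e \<notin> imag_proj f"
  obtains V where "open V" "hyp_cone f e \<inter> V = {}" "- imag_proj f \<subseteq> hyp_cone f e \<union> V"
proof
  define V where "V = {y. \<exists>\<sigma>\<in>{\<sigma>. 0 < Re \<sigma>}. mpoly_eval f (cvec y + \<sigma> *s cvec e) = 0}"
  have fe: "mpoly_eval f (cvec e) \<noteq> 0" by (rule mpoly_eval_cvec_nonzero_if_notin_imag_proj[OF e])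
  show "open V" unfolding V_def
    by (intro open_root_params[OF continuous_on_cvec fe] open_Collect_less continuous_intros)
  show "hyp_cone f e \<inter> V = {}"
  proof (intro set_eqI iffI)
    fix y assume "y \<in> hyp_cone f e \<inter> V"
    then obtain \<sigma> where "y \<in> hyp_cone f e" "0 < Re \<sigma>" and root: "mpoly_eval f (cvec y + \<sigma> *s cvec e) = 0"
      unfolding V_def by blast
    moreover have "\<sigma> = complex_of_real (Re \<sigma>)"
      using real_roots_if_notin_imag_proj[OF e root] by (simp add: complex_eq_iff)
    ultimately have "Re \<sigma> < 0" unfolding hyp_cone_iff by metis
    with \<open>0 < Re \<sigma>\<close> show "y \<in> {}" by simp
  qed simp
  show "- imag_proj f \<subseteq> hyp_cone f e \<union> V"
  proof
    fix y assume y: "y \<in> - imag_proj f"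
    show "y \<in> hyp_cone f e \<union> V"
    proof (cases "y \<in> hyp_cone f e")
      case False
      then obtain t :: real where "0 \<le> t" and root: "mpoly_eval f (cvec y + complex_of_real t *s cvec e) = 0"
        unfolding hyp_cone_iff by (auto simp: not_less)
      moreover have "t \<noteq> 0"
        using root y mpoly_eval_cvec_nonzero_if_notin_imag_proj by auto
      ultimately show ?thesis unfolding V_def by (intro UnI2 CollectI bexI[of _ "complex_of_real t"]) auto
    qed simp
  qed
qed

lemma connected_component_compl_imag_proj:
  assumes e: "e \<notin> imag_proj f"
  shows "connected_component_set (- imag_proj f) e = hyp_cone f e"
proof
  have fe: "mpoly_eval f (cvec e) \<noteq> 0" by (rule mpoly_eval_cvec_nonzero_if_notin_imag_proj[OF e])
  show "hyp_cone f e \<subseteq> connected_component_set (- imag_proj f) e"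
    by (intro connected_component_maximal self_in_hyp_cone connected_hyp_cone fe
        hyp_cone_subset_compl_imag_proj e)
  obtain V where V: "open V" "hyp_cone f e \<inter> V = {}" "- imag_proj f \<subseteq> hyp_cone f e \<union> V"
    using compl_imag_proj_split[OF e] by blast
  let ?C = "connected_component_set (- imag_proj f) e"
  have "?C \<subseteq> - imag_proj f" by (rule connected_component_subset)
  then have "hyp_cone f e \<inter> ?C = {} \<or> V \<inter> ?C = {}"
    using V by (intro connectedD connected_connected_component open_hyp_cone fe) auto
  moreover have "e \<in> hyp_cone f e \<inter> ?C" using e self_in_hyp_cone[OF fe] by simp
  ultimately show "?C \<subseteq> hyp_cone f e" using V(3) \<open>?C \<subseteq> - imag_proj f\<close> by blast
qed

lemma components_compl_imag_proj:
  "C \<in> components (- imag_proj f) \<longleftrightarrow> (\<exists>e. e \<notin> imag_proj f \<and> C = hyp_cone f e)"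
  unfolding components_iff using connected_component_compl_imag_proj by auto

lemma uminus_image_component_compl_imag_proj:
  assumes "C \<in> components (- imag_proj f)"
  shows "uminus ` C \<in> components (- imag_proj f)"
proof -
  obtain e where e: "e \<notin> imag_proj f" and C: "C = hyp_cone f e"
    using components_compl_imag_proj[THEN iffD1, OF assms] by blast
  then have "- e \<notin> imag_proj f" using scaleR_in_imag_proj[of "- e" "- 1"] by auto
  then show ?thesis unfolding C uminus_hyp_cone by (auto simp: components_compl_imag_proj)
qed

end

lemma imag_proj_not_convex_example:
  assumes "CARD('n) \<ge> 2"
  obtains g :: "('n::finite) cpoly" where "is_mpoly g" "homogeneous_mpoly g" "\<not> convex (imag_proj g)"
proof -
  obtain i j :: 'n where "i \<noteq> j"
    using assms card_le_Suc0_iff_eq[of "UNIV :: 'n set"] by fastforce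
  define \<alpha>0 where "\<alpha>0 k = (if k = i \<or> k = j then 1 else 0 :: nat)" for k
  define g where "g \<alpha> = (if \<alpha> = \<alpha>0 then 1 else 0 :: complex)" for \<alpha>
  have supp: "{\<alpha>. g \<alpha> \<noteq> 0} = {\<alpha>0}" unfolding g_def by auto
  have "is_mpoly g" unfolding is_mpoly_def supp by simp
  have "(\<Sum>k\<in>UNIV. \<alpha>0 k) = 2"
    using \<open>i \<noteq> j\<close> by (simp add: \<alpha>0_def sum.If_cases Collect_disj_eq)
  then have "homogeneous_mpoly g" unfolding homogeneous_mpoly_def g_def by auto
  have eval: "mpoly_eval g z = z $ i * z $ j" for z
  proof -
    have "mpoly_eval g z = (\<Prod>k\<in>UNIV. (if k = i then z $ k else 1) * (if k = j then z $ k else 1))"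
      unfolding mpoly_eval_def supp using \<open>i \<noteq> j\<close> by (simp add: g_def \<alpha>0_def) (intro prod.cong, auto)
    then show ?thesis by (simp add: prod.distrib)
  qed
  \<comment> \<open>\<open>I(z\<^sub>i z\<^sub>j)\<close> is the union of the hyperplanes \<open>y\<^sub>i = 0\<close> and \<open>y\<^sub>j = 0\<close>\<close>
  define u :: "real ^ 'n" where "u = (\<chi> k. if k = j then 1 else 0)"
  define v :: "real ^ 'n" where "v = (\<chi> k. if k = i then 1 else 0)"
  have "u \<in> imag_proj g" "v \<in> imag_proj g"
    unfolding imag_proj_iff eval using \<open>i \<noteq> j\<close> by (auto simp: u_def v_def cvec_def intro!: exI[of _ 0])
  moreover have "(1/2) *\<^sub>R u + (1/2) *\<^sub>R v \<notin> imag_proj g"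
  proof
    assume "(1/2) *\<^sub>R u + (1/2) *\<^sub>R v \<in> imag_proj g"
    then obtain x where "mpoly_eval g (cvec x + \<i> *s cvec ((1/2) *\<^sub>R u + (1/2) *\<^sub>R v)) = 0"
      unfolding imag_proj_iff by blast
    moreover have "(cvec x + \<i> *s cvec ((1/2) *\<^sub>R u + (1/2) *\<^sub>R v)) $ k \<noteq> 0"
      if "k = i \<or> k = j" for k
    proof -
      have "Im ((cvec x + \<i> *s cvec ((1/2) *\<^sub>R u + (1/2) *\<^sub>R v)) $ k) = 1/2"
        using that \<open>i \<noteq> j\<close> by (auto simp: u_def v_def cvec_def)
      then show ?thesis by (metis zero_complex.sel(2) zero_neq_numeral divide_eq_0_iff one_neq_zero)
    qed
    ultimately show False unfolding eval by simp
  qed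
  ultimately have "\<not> convex (imag_proj g)" using convexD[of "imag_proj g" u v "1/2" "1/2"] by auto
  with \<open>is_mpoly g\<close> \<open>homogeneous_mpoly g\<close> that show ?thesis by blast
qed

theorem corollary2p1:
  fixes f :: "('n::finite) cpoly"
  assumes "is_mpoly f" and "homogeneous_mpoly f"
  shows "closed (imag_proj f)
    \<and> (\<forall>y \<in> imag_proj f. \<forall>a::real. a \<ge> 0 \<longrightarrow> a *\<^sub>R y \<in> imag_proj f)
    \<and> (CARD('n) \<ge> 2 \<longrightarrow> (\<exists>g :: 'n cpoly. is_mpoly g \<and> homogeneous_mpoly g \<and> \<not> convex (imag_proj g)))
    \<and> (\<forall>C \<in> components (- imag_proj f). \<exists>e. hyperbolic f e \<and> C = hyp_cone f e)
    \<and> (\<forall>C \<in> components (- imag_proj f). uminus ` C \<in> components (- imag_proj f))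
    \<and> (\<forall>C \<in> components (- imag_proj f). \<not> bounded C)"
proof -
  obtain d where "homogeneous_cpoly f d"
    using assms unfolding homogeneous_mpoly_def homogeneous_cpoly_def by blast
  then interpret homogeneous_cpoly f d .
  have "closed (imag_proj f)" using open_compl_imag_proj by (simp add: closed_open)
  moreover have "\<forall>y \<in> imag_proj f. \<forall>a::real. a \<ge> 0 \<longrightarrow> a *\<^sub>R y \<in> imag_proj f"
    using scaleR_in_imag_proj by blast
  moreover have "CARD('n) \<ge> 2 \<longrightarrow> (\<exists>g :: 'n cpoly. is_mpoly g \<and> homogeneous_mpoly g \<and> \<not> convex (imag_proj g))"
    using imag_proj_not_convex_example by metis
  moreover have "\<exists>e. hyperbolic f e \<and> C = hyp_cone f e" "\<not> bounded C"
    if comp: "C \<in> components (- imag_proj f)" for C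
  proof -
    obtain e where "e \<notin> imag_proj f" and "C = hyp_cone f e"
      using components_compl_imag_proj[THEN iffD1, OF comp] by blast
    with hyperbolic_if_notin_imag_proj not_bounded_hyp_cone mpoly_eval_cvec_nonzero_if_notin_imag_proj
    show "\<exists>e. hyperbolic f e \<and> C = hyp_cone f e" "\<not> bounded C" by blast+
  qed
  moreover note uminus_image_component_compl_imag_proj
  ultimately show ?thesis by (intro conjI ballI) blast+
qed

end
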